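(* Let $H$ be a cocommutative pointed Majid algebra over a field $k$ whose quiver $Q$ is connected (equivalently, $H$ is link-indecomposable). Then $Q$ has exactly one vertex (so $Q$ is a multi-loop quiver, all arrows being loops at that vertex) and hence $H$ is connected, i.e. its coradical is $k1_H$.
   Context: A Majid algebra (dual quasi-Hopf algebra) over $k$ is a coalgebra $(H,\Delta,\varepsilon)$ together with coalgebra maps $\mathrm{M}:H\otimes H\to H$ and $\mu:k\to H$, a convolution-invertible reassociator $\Phi:H^{\otimes3}\to k$, a coalgebra antimorphism $\mathcal S$ and functionals $\alpha,\beta$ satisfying the dual quasi-Hopf axioms: $a_1(b_1c_1)\Phi(a_2,b_2,c_2)=\Phi(a_1,b_1,c_1)(a_2b_2)c_2$; $1_Ha=a=a1_H$; $\Phi(a_1,b_1,c_1d_1)\Phi(a_2b_2,c_2,d_2)=\Phi(b_1,c_1,d_1)\Phi(a_1,b_2c_2,d_2)\Phi(a_2,b_3,c_3)$; $\Phi(a,1_H,b)=\varepsilon(a)\varepsilon(b)$; $\mathcal S(a_1)\alpha(a_2)a_3=\alpha(a)1_H$, $a_1\beta(a_2)\mathcal S(a_3)=\beta(a)1_H$; $\Phi(a_1,\mathcal S(a_3),a_5)\beta(a_2)\alpha(a_4)=\Phi^{-1}(\mathcal S(a_1),a_3,\mathcal S(a_5))\alpha(a_2)\beta(a_4)=\varepsilon(a)$. $H$ is pointed if all simple subcoalgebras are one-dimensional, and cocommutative if $\Delta=\Delta^{op}$. The quiver of a pointed coalgebra $C$ has vertex set the group-likes $G(C)$ and $\dim_k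 P_{g,h}(C)/k(g-h)$ arrows from $h$ to $g$, where $P_{g,h}(C)=\{x\in C:\Delta(x)=g\otimes x+x\otimes h\}$. *)

theory Defs
  imports Main
begin

text \<open>Vector spaces are presented by a basis: a vector of H over the field 'k with basis
  indexed by 'b is a finitely supported function 'b \<Rightarrow> 'k; H \<otimes> H has basis 'b \<times> 'b.
  Linear maps are given by their values on basis elements and extended linearly.\<close>

definition supp :: "('a \<Rightarrow> 'k::zero) \<Rightarrow> 'a set" where
  "supp f = {x. f x \<noteq> 0}"

definition fvec :: "('a \<Rightarrow> 'k::zero) set" where
  "fvec = {f. finite (supp f)}"

definition zvec :: "'a \<Rightarrow> 'k::zero" where
  "zvec = (\<lambda>_. 0)"

definition bas :: "'a \<Rightarrow> 'a \<Rightarrow> 'k::{zero,one}" where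
  "bas a = (\<lambda>i. if i = a then 1 else 0)"

definition lin :: "('a \<Rightarrow> 'c \<Rightarrow> 'k::comm_semiring_1) \<Rightarrow> ('a \<Rightarrow> 'k) \<Rightarrow> 'c \<Rightarrow> 'k" where
  "lin L x = (\<lambda>c. \<Sum>i\<in>supp x. x i * L i c)"

definition ev :: "('a \<Rightarrow> 'k::comm_semiring_1) \<Rightarrow> ('a \<Rightarrow> 'k) \<Rightarrow> 'k" where
  "ev f x = (\<Sum>i\<in>supp x. x i * f i)"

definition tens :: "('a \<Rightarrow> 'k::times) \<Rightarrow> ('c \<Rightarrow> 'k) \<Rightarrow> ('a \<times> 'c) \<Rightarrow> 'k" where
  "tens x y = (\<lambda>(i,j). x i * y j)"

text \<open>Sweedler sums for a basis element a: sum over a_1 \<otimes> a_2 = \<Delta>(a)\<close>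
definition sw :: "('b \<Rightarrow> 'b \<times> 'b \<Rightarrow> 'k::comm_semiring_1) \<Rightarrow> 'b \<Rightarrow> ('b \<Rightarrow> 'b \<Rightarrow> 'k) \<Rightarrow> 'k" where
  "sw D a f = (\<Sum>p\<in>supp (D a). D a p * f (fst p) (snd p))"

definition sw3 :: "('b \<Rightarrow> 'b \<times> 'b \<Rightarrow> 'k::comm_semiring_1) \<Rightarrow> 'b \<Rightarrow> ('b \<Rightarrow> 'b \<Rightarrow> 'b \<Rightarrow> 'k) \<Rightarrow> 'k" where
  "sw3 D a f = sw D a (\<lambda>x y. sw D y (\<lambda>y1 y2. f x y1 y2))"

definition sw5 :: "('b \<Rightarrow> 'b \<times> 'b \<Rightarrow> 'k::comm_semiring_1) \<Rightarrow> 'b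
     \<Rightarrow> ('b \<Rightarrow> 'b \<Rightarrow> 'b \<Rightarrow> 'b \<Rightarrow> 'b \<Rightarrow> 'k) \<Rightarrow> 'k" where
  "sw5 D a f = sw D a (\<lambda>x1 y. sw3 D y (\<lambda>x2 x3 z. sw D z (\<lambda>x4 x5. f x1 x2 x3 x4 x5)))"

text \<open>multiplication H \<otimes> H \<rightarrow> H given on basis pairs, extended bilinearly\<close>
definition mul :: "('b \<Rightarrow> 'b \<Rightarrow> 'b \<Rightarrow> 'k::comm_semiring_1) \<Rightarrow> ('b \<Rightarrow> 'k) \<Rightarrow> ('b \<Rightarrow> 'k) \<Rightarrow> 'b \<Rightarrow> 'k" where
  "mul M x y = lin (\<lambda>p. M (fst p) (snd p)) (tens x y)"

definition phv :: "('b \<Rightarrow> 'b \<Rightarrow> 'b \<Rightarrow> 'k::comm_semiring_1) \<Rightarrow> ('b \<Rightarrow> 'k) \<Rightarrow> ('b \<Rightarrow> 'k) \<Rightarrow> ('b \<Rightarrow> 'k) \<Rightarrow> 'k" where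
  "phv P x y z = (\<Sum>i\<in>supp x. \<Sum>j\<in>supp y. \<Sum>l\<in>supp z. x i * y j * z l * P i j l)"

definition coalgebra :: "('b \<Rightarrow> 'b \<times> 'b \<Rightarrow> 'k::field) \<Rightarrow> ('b \<Rightarrow> 'k) \<Rightarrow> bool" where
  "coalgebra D eps \<longleftrightarrow>
     (\<forall>a. finite (supp (D a))) \<and>
     (\<forall>a p q r. sw D a (\<lambda>x y. D x (p,q) * bas y r) = sw D a (\<lambda>x y. bas x p * D y (q,r))) \<and>
     (\<forall>a c. sw D a (\<lambda>x y. eps x * bas y c) = bas a c) \<and>
     (\<forall>a c. sw D a (\<lambda>x y. bas x c * eps y) = bas a c)"

definition cocommutative :: "('b \<Rightarrow> 'b \<times> 'b \<Rightarrow> 'k::field) \<Rightarrow> bool" where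
  "cocommutative D \<longleftrightarrow> (\<forall>a x y. D a (x,y) = D a (y,x))"

text \<open>Majid algebra (dual quasi-Hopf algebra): coalgebra (D, eps), multiplication M,
  unit u = \<mu>(1), reassociator Phi, antipode S, functionals alpha, beta.\<close>
definition majid :: "('b \<Rightarrow> 'b \<times> 'b \<Rightarrow> 'k::field) \<Rightarrow> ('b \<Rightarrow> 'k) \<Rightarrow> ('b \<Rightarrow> 'b \<Rightarrow> 'b \<Rightarrow> 'k)
    \<Rightarrow> ('b \<Rightarrow> 'k) \<Rightarrow> ('b \<Rightarrow> 'b \<Rightarrow> 'b \<Rightarrow> 'k) \<Rightarrow> ('b \<Rightarrow> 'b \<Rightarrow> 'k) \<Rightarrow> ('b \<Rightarrow> 'k) \<Rightarrow> ('b \<Rightarrow> 'k) \<Rightarrow> bool" where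
  "majid D eps M u Phi S alpha beta \<longleftrightarrow>
     coalgebra D eps \<and>
     (\<forall>i j. M i j \<in> fvec) \<and> u \<in> fvec \<and> (\<forall>a. S a \<in> fvec) \<and>
     \<comment> \<open>M is a coalgebra map\<close>
     (\<forall>i j p q. lin D (M i j) (p,q) = sw D i (\<lambda>i1 i2. sw D j (\<lambda>j1 j2. M i1 j1 p * M i2 j2 q))) \<and>
     (\<forall>i j. ev eps (M i j) = eps i * eps j) \<and>
     \<comment> \<open>\<mu> is a coalgebra map\<close>
     lin D u = tens u u \<and> ev eps u = 1 \<and>
     \<comment> \<open>quasi-associativity\<close>
     (\<forall>a b c t.
        sw D a (\<lambda>a1 a2. sw D b (\<lambda>b1 b2. sw D c (\<lambda>c1 c2.
           mul M (bas a1) (mul M (bas b1) (bas c1)) t * Phi a2 b2 c2)))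
      = sw D a (\<lambda>a1 a2. sw D b (\<lambda>b1 b2. sw D c (\<lambda>c1 c2.
           Phi a1 b1 c1 * mul M (mul M (bas a2) (bas b2)) (bas c2) t)))) \<and>
     \<comment> \<open>unit\<close>
     (\<forall>a. mul M u (bas a) = bas a \<and> mul M (bas a) u = bas a) \<and>
     \<comment> \<open>3-cocycle (pentagon)\<close>
     (\<forall>a b c d.
        sw D a (\<lambda>a1 a2. sw D b (\<lambda>b1 b2. sw D c (\<lambda>c1 c2. sw D d (\<lambda>d1 d2.
           phv Phi (bas a1) (bas b1) (mul M (bas c1) (bas d1))
             * phv Phi (mul M (bas a2) (bas b2)) (bas c2) (bas d2)))))
      = sw D a (\<lambda>a1 a2. sw3 D b (\<lambda>b1 b2 b3. sw3 D c (\<lambda>c1 c2 c3. sw D d (\<lambda>d1 d2.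
           Phi b1 c1 d1 * phv Phi (bas a1) (mul M (bas b2) (bas c2)) (bas d2) * Phi a2 b3 c3))))) \<and>
     (\<forall>a b. phv Phi (bas a) u (bas b) = eps a * eps b) \<and>
     \<comment> \<open>S is a coalgebra antimorphism\<close>
     (\<forall>a p q. lin D (S a) (p,q) = sw D a (\<lambda>a1 a2. S a2 p * S a1 q)) \<and>
     (\<forall>a. ev eps (S a) = eps a) \<and>
     (\<forall>a t. sw3 D a (\<lambda>a1 a2 a3. alpha a2 * mul M (S a1) (bas a3) t) = alpha a * u t) \<and>
     (\<forall>a t. sw3 D a (\<lambda>a1 a2 a3. beta a2 * mul M (bas a1) (S a3) t) = beta a * u t) \<and>
     \<comment> \<open>Phi is convolution invertible with inverse Phi', and the antipode axioms\<close>
     (\<exists>Phi'.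
        (\<forall>a b c. sw D a (\<lambda>a1 a2. sw D b (\<lambda>b1 b2. sw D c (\<lambda>c1 c2. Phi a1 b1 c1 * Phi' a2 b2 c2)))
                 = eps a * eps b * eps c) \<and>
        (\<forall>a b c. sw D a (\<lambda>a1 a2. sw D b (\<lambda>b1 b2. sw D c (\<lambda>c1 c2. Phi' a1 b1 c1 * Phi a2 b2 c2)))
                 = eps a * eps b * eps c) \<and>
        (\<forall>a. sw5 D a (\<lambda>a1 a2 a3 a4 a5. phv Phi (bas a1) (S a3) (bas a5) * beta a2 * alpha a4) = eps a) \<and>
        (\<forall>a. sw5 D a (\<lambda>a1 a2 a3 a4 a5. phv Phi' (S a1) (bas a3) (S a5) * alpha a2 * beta a4) = eps a))"

definition subspace :: "('b \<Rightarrow> 'k::field) set \<Rightarrow> bool" where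
  "subspace W \<longleftrightarrow> W \<subseteq> fvec \<and> zvec \<in> W \<and> (\<forall>x\<in>W. \<forall>y\<in>W. (\<lambda>i. x i + y i) \<in> W)
      \<and> (\<forall>c. \<forall>x\<in>W. (\<lambda>i. c * x i) \<in> W)"

text \<open>W \<otimes> W inside H \<otimes> H\<close>
definition tspan :: "('b \<Rightarrow> 'k::field) set \<Rightarrow> ('b \<times> 'b \<Rightarrow> 'k) set" where
  "tspan W = {z. \<exists>(n::nat) xs ys. (\<forall>i<n. xs i \<in> W \<and> ys i \<in> W) \<and>
                    z = (\<lambda>p. \<Sum>i<n. tens (xs i) (ys i) p)}"

definition span :: "('b \<Rightarrow> 'k::field) set \<Rightarrow> ('b \<Rightarrow> 'k) set" where
  "span S = {z. \<exists>(n::nat) cs xs. (\<forall>i<n. xs i \<in> S) \<and> z = (\<lambda>t. \<Sum>i<n. cs i * xs i t)}"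

definition line :: "('b \<Rightarrow> 'k::field) \<Rightarrow> ('b \<Rightarrow> 'k) set" where
  "line x = {(\<lambda>i. c * x i) | c. True}"

definition subcoalg :: "('b \<Rightarrow> 'b \<times> 'b \<Rightarrow> 'k::field) \<Rightarrow> ('b \<Rightarrow> 'k) set \<Rightarrow> bool" where
  "subcoalg D W \<longleftrightarrow> subspace W \<and> (\<forall>x\<in>W. lin D x \<in> tspan W)"

definition simple_subcoalg :: "('b \<Rightarrow> 'b \<times> 'b \<Rightarrow> 'k::field) \<Rightarrow> ('b \<Rightarrow> 'k) set \<Rightarrow> bool" where
  "simple_subcoalg D W \<longleftrightarrow> subcoalg D W \<and> W \<noteq> {zvec} \<and>
      (\<forall>W'. subcoalg D W' \<and> W' \<subseteq> W \<longrightarrow> W' = {zvec} \<or> W' = W)"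

definition pointed :: "('b \<Rightarrow> 'b \<times> 'b \<Rightarrow> 'k::field) \<Rightarrow> bool" where
  "pointed D \<longleftrightarrow> (\<forall>W. simple_subcoalg D W \<longrightarrow> (\<exists>x. x \<noteq> zvec \<and> W = line x))"

definition coradical :: "('b \<Rightarrow> 'b \<times> 'b \<Rightarrow> 'k::field) \<Rightarrow> ('b \<Rightarrow> 'k) set" where
  "coradical D = span (\<Union>{W. simple_subcoalg D W})"

definition grouplike :: "('b \<Rightarrow> 'b \<times> 'b \<Rightarrow> 'k::field) \<Rightarrow> ('b \<Rightarrow> 'k) set" where
  "grouplike D = {g \<in> fvec. g \<noteq> zvec \<and> lin D g = tens g g}"

definition prim :: "('b \<Rightarrow> 'b \<times> 'b \<Rightarrow> 'k::field) \<Rightarrow> ('b \<Rightarrow> 'k) \<Rightarrow> ('b \<Rightarrow> 'k) \<Rightarrow> ('b \<Rightarrow> 'k) set" where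
  "prim D g h = {x \<in> fvec. lin D x = (\<lambda>p. tens g x p + tens x h p)}"

text \<open>There is at least one arrow from h to g in the quiver iff dim P_{g,h}/k(g-h) > 0,
  i.e. iff P_{g,h} is not contained in k(g-h) (note k(g-h) \<subseteq> P_{g,h} always).\<close>
definition arrow :: "('b \<Rightarrow> 'b \<times> 'b \<Rightarrow> 'k::field) \<Rightarrow> ('b \<Rightarrow> 'k) \<Rightarrow> ('b \<Rightarrow> 'k) \<Rightarrow> bool" where
  "arrow D h g \<longleftrightarrow> \<not> (prim D g h \<subseteq> line (\<lambda>i. g i - h i))"

definition quiver_connected :: "('b \<Rightarrow> 'b \<times> 'b \<Rightarrow> 'k::field) \<Rightarrow> bool" where
  "quiver_connected D \<longleftrightarrow>
     (\<forall>g\<in>grouplike D. \<forall>h\<in>grouplike D.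
        (g, h) \<in> {(x, y). x \<in> grouplike D \<and> y \<in> grouplike D \<and> (arrow D x y \<or> arrow D y x)}\<^sup>*)"

end

theory Submission
  imports Defs
begin

(* In a cocommutative coalgebra an element x of P_{g,h} satisfies
   g(a)x(b) + x(a)h(b) = g(b)x(a) + x(b)h(a) for all basis indices a, b; since two
   distinct grouplikes are linearly independent, a nonvanishing 2x2 minor of (g,h)
   lets us solve for x and shows x is a multiple of g - h.  Hence the quiver of a
   cocommutative coalgebra has no arrows between distinct vertices, and a connected
   quiver has at most one vertex.  In a Majid algebra the unit u is grouplike, so
   G(H) = {u}.  Finally, in a pointed coalgebra every simple subcoalgebra is the line
   of some grouplike (a one-dimensional subcoalgebra k x has Delta(x) = C x (x) x with
   C <> 0 by the counit axiom, and C x is grouplike), while the line of a grouplike is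
   always simple; so the coradical is the span of the lines k g, g in G(H), which here
   is k u. *)

lemma lin_scale:
  fixes x :: "'a \<Rightarrow> 'k::field"
  shows "lin L (\<lambda>j. c * x j) = (\<lambda>p. c * lin L x p)"
proof (cases "c = 0")
  case True then show ?thesis by (simp add: lin_def supp_def)
next
  case False
  then have "supp (\<lambda>j. c * x j) = supp x" by (auto simp: supp_def)
  then show ?thesis by (simp add: lin_def sum_distrib_left mult.assoc)
qed

lemma line_memI: "(\<lambda>i. c * x i) \<in> line x"
  by (auto simp: line_def)

lemma line_self: "x \<in> line x"
  using line_memI[of 1 x] by simp

lemma line_memE:
  assumes "y \<in> line x" obtains c where "y = (\<lambda>i. c * x i)"
  using assms by (auto simp: line_def)

lemma line_rescale:
  fixes x :: "'b \<Rightarrow> 'k::field"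
  assumes "C \<noteq> 0"
  shows "line (\<lambda>i. C * x i) = line x"
proof
  show "line (\<lambda>i. C * x i) \<subseteq> line x"
    by (auto elim!: line_memE simp: mult.assoc[symmetric] intro: line_memI)
  show "line x \<subseteq> line (\<lambda>i. C * x i)"
  proof
    fix v assume "v \<in> line x"
    then obtain c where "v = (\<lambda>i. c * x i)" by (rule line_memE)
    then have "v = (\<lambda>i. (c / C) * (C * x i))" using assms by (simp add: fun_eq_iff)
    then show "v \<in> line (\<lambda>i. C * x i)" by (metis line_memI)
  qed
qed

lemma span_line: "span (line x) = line x"
proof
  show "span (line x) \<subseteq> line x"
  proof
    fix z assume "z \<in> span (line x)"
    then obtain n :: nat and cs xs where xs: "\<forall>i<n. xs i \<in> line x"
      and z: "z = (\<lambda>t. \<Sum>i<n. cs i * xs i t)" unfolding span_def by blast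
    obtain ds where ds: "\<forall>i<n. xs i = (\<lambda>j. ds i * x j)"
      using xs by (auto simp: line_def) metis
    have "z = (\<lambda>t. (\<Sum>i<n. cs i * ds i) * x t)"
      unfolding z sum_distrib_right by (intro ext sum.cong) (auto simp: ds)
    then show "z \<in> line x" by (simp add: line_memI)
  qed
  show "line x \<subseteq> span (line x)"
  proof
    fix z assume "z \<in> line x"
    moreover have "z = (\<lambda>t. \<Sum>i<(1::nat). (\<lambda>_. 1) i * (\<lambda>_. z) i t)" by simp
    ultimately show "z \<in> span (line x)" unfolding span_def
      by (intro CollectI exI[of _ "1::nat"] exI[of _ "\<lambda>_. 1"] exI[of _ "\<lambda>_. z"]) auto
  qed
qed

lemma line_subspace:
  assumes "x \<in> fvec"
  shows "subspace (line x)"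
  unfolding subspace_def
proof (intro conjI ballI allI)
  show "line x \<subseteq> fvec"
  proof
    fix y assume "y \<in> line x"
    then obtain c where y: "y = (\<lambda>i. c * x i)" by (rule line_memE)
    have "supp y \<subseteq> supp x" by (auto simp: y supp_def)
    then show "y \<in> fvec" using assms by (auto simp: fvec_def intro: finite_subset)
  qed
  show "zvec \<in> line x" using line_memI[of 0 x] by (simp add: zvec_def)
  fix y z assume "y \<in> line x" "z \<in> line x"
  then show "(\<lambda>i. y i + z i) \<in> line x"
    by (auto elim!: line_memE simp: distrib_right[symmetric] intro: line_memI)
next
  fix c y assume "y \<in> line x"
  then show "(\<lambda>i. c * y i) \<in> line x"
    by (auto elim!: line_memE simp: mult.assoc[symmetric] intro: line_memI)
qed

lemma subspace_of_line:
  fixes x :: "'b \<Rightarrow> 'k::field"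
  assumes W: "subspace W" "W \<subseteq> line x"
  shows "W = {zvec} \<or> W = line x"
proof (cases "W = {zvec}")
  case False
  have "zvec \<in> W" using W by (simp add: subspace_def)
  then obtain y where yW: "y \<in> W" and ynz: "y \<noteq> zvec" using False by blast
  then obtain d where y: "y = (\<lambda>i. d * x i)" using W by (auto elim: line_memE)
  have "d \<noteq> 0" using ynz y by (auto simp: zvec_def fun_eq_iff)
  then have "line x = line y" using y line_rescale by metis
  also have "\<dots> \<subseteq> W" using W yW by (auto simp: subspace_def elim!: line_memE)
  finally show ?thesis using W by blast
qed simp

text \<open>The comultiplication of a coalgebra is injective, by the counit axiom.\<close>
lemma lin_comult_zero:
  fixes D :: "'b \<Rightarrow> 'b \<times> 'b \<Rightarrow> 'k::field"
  assumes co: "coalgebra D eps" and xf: "x \<in> fvec" and z: "lin D x = (\<lambda>p. 0)"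
  shows "x = zvec"
proof
  fix c
  define A where "A = supp x"
  define P where "P = (\<Union>a\<in>A. supp (D a))"
  have fA: "finite A" using xf by (simp add: A_def fvec_def)
  have fP: "finite P" using fA co by (simp add: P_def coalgebra_def)
  have counit: "\<And>a. sw D a (\<lambda>y z. bas y c * eps z) = bas a c" using co by (simp add: coalgebra_def)
  have "x c = (\<Sum>a\<in>A. x a * bas a c)"
    using fA by (simp add: bas_def sum.delta' A_def supp_def if_distrib[of "(*) _"] cong: if_cong)
  also have "\<dots> = (\<Sum>a\<in>A. x a * (\<Sum>p\<in>P. D a p * (bas (fst p) c * eps (snd p))))"
  proof (rule sum.cong[OF refl])
    fix a assume "a \<in> A"
    then have "sw D a (\<lambda>y z. bas y c * eps z) = (\<Sum>p\<in>P. D a p * (bas (fst p) c * eps (snd p)))"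
      unfolding sw_def by (intro sum.mono_neutral_left) (use fP in \<open>auto simp: P_def supp_def\<close>)
    then show "x a * bas a c = x a * (\<Sum>p\<in>P. D a p * (bas (fst p) c * eps (snd p)))"
      using counit by simp
  qed
  also have "\<dots> = (\<Sum>p\<in>P. lin D x p * (bas (fst p) c * eps (snd p)))"
    by (simp add: lin_def A_def sum_distrib_left sum_distrib_right mult.assoc sum.swap[of _ "supp x"])
  also have "\<dots> = 0" using z by simp
  finally show "x c = zvec c" by (simp add: zvec_def)
qed

lemma unit_grouplike:
  assumes "majid D eps M u Phi S alpha beta"
  shows "u \<in> grouplike D"
proof -
  have "u \<in> fvec" "lin D u = tens u u" "ev eps u = 1"
    using assms by (auto simp: majid_def)
  moreover have "u \<noteq> zvec"
    using \<open>ev eps u = 1\<close> by (auto simp: ev_def supp_def zvec_def)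
  ultimately show ?thesis by (simp add: grouplike_def)
qed

lemma grouplike_line_simple:
  assumes g: "g \<in> grouplike D"
  shows "simple_subcoalg D (line g)"
proof -
  have gf: "g \<in> fvec" and gnz: "g \<noteq> zvec" and dg: "lin D g = tens g g"
    using g by (auto simp: grouplike_def)
  have "lin D x \<in> tspan (line g)" if "x \<in> line g" for x
  proof -
    obtain a where x: "x = (\<lambda>i. a * g i)" using \<open>x \<in> line g\<close> by (rule line_memE)
    have "lin D x = (\<lambda>p. \<Sum>i<(1::nat). tens ((\<lambda>_. x) i) ((\<lambda>_. g) i) p)"
      using dg by (simp add: x lin_scale tens_def fun_eq_iff mult.assoc split: prod.split)
    then show ?thesis using that line_self[of g] unfolding tspan_def
      by (intro CollectI exI[of _ "1::nat"] exI[of _ "\<lambda>_. x"] exI[of _ "\<lambda>_. g"]) auto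
  qed
  then have "subcoalg D (line g)" using line_subspace[OF gf] by (simp add: subcoalg_def)
  moreover have "line g \<noteq> {zvec}" using gnz line_self[of g] by blast
  ultimately show ?thesis
    using subspace_of_line by (auto simp: simple_subcoalg_def subcoalg_def)
qed

lemma line_subcoalg_grouplike:
  fixes D :: "'b \<Rightarrow> 'b \<times> 'b \<Rightarrow> 'k::field"
  assumes co: "coalgebra D eps" and sc: "subcoalg D (line x)" and xnz: "x \<noteq> zvec"
  shows "\<exists>g\<in>grouplike D. line x = line g"
proof -
  have xf: "x \<in> fvec" using sc line_self[of x] by (auto simp: subcoalg_def subspace_def)
  obtain n :: nat and xs ys where xy: "\<forall>i<n. xs i \<in> line x \<and> ys i \<in> line x"
    and dx: "lin D x = (\<lambda>p. \<Sum>i<n. tens (xs i) (ys i) p)"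
    using sc line_self[of x] unfolding subcoalg_def tspan_def by blast
  obtain cs ds where cd: "\<forall>i<n. xs i = (\<lambda>j. cs i * x j) \<and> ys i = (\<lambda>j. ds i * x j)"
    using xy by (auto simp: line_def) metis
  define C where "C = (\<Sum>i<n. cs i * ds i)"
  have dxC: "lin D x = (\<lambda>p. C * tens x x p)"
    unfolding dx C_def sum_distrib_right
    by (intro ext sum.cong) (auto simp: cd tens_def algebra_simps split: prod.split)
  have C0: "C \<noteq> 0"
    using dxC lin_comult_zero[OF co xf] xnz by force
  define g where "g = (\<lambda>i. C * x i)"
  have "supp g = supp x" using C0 by (auto simp: g_def supp_def)
  then have "g \<in> fvec" using xf by (simp add: fvec_def)
  moreover have "g \<noteq> zvec" using xnz C0 by (auto simp: g_def zvec_def fun_eq_iff)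
  moreover have "lin D g = tens g g"
    using dxC by (simp add: g_def lin_scale tens_def fun_eq_iff split: prod.split)
  ultimately have "g \<in> grouplike D" by (simp add: grouplike_def)
  moreover have "line x = line g" unfolding g_def by (rule line_rescale[OF C0, symmetric])
  ultimately show ?thesis by blast
qed

lemma pointed_simple_subcoalgs:
  assumes co: "coalgebra D eps" and pt: "pointed D"
  shows "{W. simple_subcoalg D W} = line ` grouplike D"
proof
  show "{W. simple_subcoalg D W} \<subseteq> line ` grouplike D"
  proof
    fix W assume "W \<in> {W. simple_subcoalg D W}"
    then have sW: "simple_subcoalg D W" by simp
    then obtain x where "x \<noteq> zvec" "W = line x" using pt by (auto simp: pointed_def)
    then show "W \<in> line ` grouplike D"
      using line_subcoalg_grouplike[OF co] sW by (fastforce simp: simple_subcoalg_def)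
  qed
  show "line ` grouplike D \<subseteq> {W. simple_subcoalg D W}"
    using grouplike_line_simple by blast
qed

text \<open>Distinct grouplike elements are linearly independent: some 2x2 minor is nonzero.\<close>
lemma grouplike_minor:
  fixes D :: "'b \<Rightarrow> 'b \<times> 'b \<Rightarrow> 'k::field"
  assumes g: "g \<in> grouplike D" and h: "h \<in> grouplike D" and ne: "g \<noteq> h"
  shows "\<exists>i j. g i * h j - g j * h i \<noteq> 0"
proof (rule ccontr)
  assume "\<not> ?thesis"
  then have m: "\<And>i j. g i * h j = g j * h i" by auto
  from g obtain i where gi: "g i \<noteq> 0" by (auto simp: grouplike_def zvec_def)
  define c where "c = h i / g i"
  have hc: "h = (\<lambda>j. c * g j)"
    using m[of i] gi by (auto simp: c_def field_simps fun_eq_iff)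
  have c0: "c \<noteq> 0" using h hc by (auto simp: grouplike_def zvec_def fun_eq_iff)
  have "tens h h = (\<lambda>p. c * tens g g p)"
    using g h hc lin_scale[of D c g] by (simp add: grouplike_def)
  then have "c * c * (g i * g i) = c * (g i * g i)"
    by (auto simp: hc tens_def algebra_simps fun_eq_iff)
  then have "c = 1" using c0 gi by simp
  then show False using hc ne by simp
qed

lemma cocomm_prim_trivial:
  fixes D :: "'b \<Rightarrow> 'b \<times> 'b \<Rightarrow> 'k::field"
  assumes cc: "cocommutative D" and g: "g \<in> grouplike D" and h: "h \<in> grouplike D"
    and ne: "g \<noteq> h"
  shows "prim D g h \<subseteq> line (\<lambda>i. g i - h i)"
proof
  fix x assume x: "x \<in> prim D g h"
  obtain i j where det: "g i * h j - g j * h i \<noteq> 0" using grouplike_minor[OF g h ne] by blast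
  have swap: "g a * x b + x a * h b = g b * x a + x b * h a" for a b
  proof -
    have "lin D x (a,b) = lin D x (b,a)" using cc by (simp add: lin_def cocommutative_def)
    then show ?thesis using x by (simp add: prim_def tens_def)
  qed
  define c where "c = (x i * h j - x j * h i) / (g i * h j - g j * h i)"
  have "x b = c * (g b - h b)" for b
  proof -
    have "h j * (g i * x b + x i * h b) - h i * (g j * x b + x j * h b)
        = h j * (g b * x i + x b * h i) - h i * (g b * x j + x b * h j)"
      using swap[of i b] swap[of j b] by simp
    then have "x b * (g i * h j - g j * h i) = (x i * h j - x j * h i) * (g b - h b)"
      by (simp add: algebra_simps)
    then show ?thesis using det by (simp add: c_def field_simps)
  qed
  then have "x = (\<lambda>b. c * (g b - h b))" by blast
  then show "x \<in> line (\<lambda>i. g i - h i)" by (simp add: line_memI)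
qed

lemma cocomm_arrow_loop:
  assumes cc: "cocommutative D" and g: "g \<in> grouplike D" and h: "h \<in> grouplike D"
    and a: "arrow D h g"
  shows "g = h"
  using cocomm_prim_trivial[OF cc g h] a by (auto simp: arrow_def)

lemma cocomm_connected_single_vertex:
  assumes cc: "cocommutative D" and conn: "quiver_connected D"
    and g: "g \<in> grouplike D" and h: "h \<in> grouplike D"
  shows "g = h"
proof -
  let ?R = "{(x, y). x \<in> grouplike D \<and> y \<in> grouplike D \<and> (arrow D x y \<or> arrow D y x)}"
  have "(g, h) \<in> ?R\<^sup>*" using conn g h by (simp add: quiver_connected_def)
  then show ?thesis
    by (induct rule: rtrancl_induct) (auto dest: cocomm_arrow_loop[OF cc])
qed

theorem mainTheorem7:
  fixes D :: "'b \<Rightarrow> 'b \<times> 'b \<Rightarrow> 'k::field"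
    and eps :: "'b \<Rightarrow> 'k" and M :: "'b \<Rightarrow> 'b \<Rightarrow> 'b \<Rightarrow> 'k" and u :: "'b \<Rightarrow> 'k"
    and Phi :: "'b \<Rightarrow> 'b \<Rightarrow> 'b \<Rightarrow> 'k" and S :: "'b \<Rightarrow> 'b \<Rightarrow> 'k"
    and alpha beta :: "'b \<Rightarrow> 'k"
  assumes "majid D eps M u Phi S alpha beta"
    and "cocommutative D"
    and "pointed D"
    and "quiver_connected D"
  shows "card (grouplike D) = 1 \<and> coradical D = line u"
proof -
  have co: "coalgebra D eps" using assms(1) by (simp add: majid_def)
  have "u \<in> grouplike D" using unit_grouplike[OF assms(1)] .
  then have G: "grouplike D = {u}"
    using cocomm_connected_single_vertex[OF assms(2,4)] by blast
  have "coradical D = span (line u)"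
    using pointed_simple_subcoalgs[OF co assms(3)] by (simp add: coradical_def G)
  then show ?thesis using G span_line by simp
qed

end
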